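(* Let $\psi\in\mathbf{\Psi}_n$ and $\psi^*(s):=\max_{t\in\Omega_n}\frac{\langle t,s\rangle}{\psi(t)}$ for $s\in\Omega_n$. Then: (i) $\psi^*\in\mathbf{\Psi}_n$; (ii) the dual norm $|\!|\!|\cdot|\!|\!|_{\psi^*}$ of $|\!|\!|\cdot|\!|\!|_\psi$ belongs to $\mathbf{N}^{\rm sc}_{(X^n)^*}$ if and only if $\psi^*\in\mathbf{\Psi}^{\rm sc}_n$ and $\|\cdot\|_{X^*}$ is strictly convex; (iii) $\psi^*(s)=|\!|\!|(s_1\mathbf{u}^*_1,\ldots,s_{n}\mathbf{u}^*_n)|\!|\!|_{\psi^*}$ for all $(\mathbf{u}^*_1,\ldots,\mathbf{u}^*_n)\in \mathbb{S}_{X^*}\times\ldots\times\mathbb{S}_{X^*}$ and $s:=(s_1,\ldots,s_{n})\in\Omega_n$; (iv) $\langle \bar t,\bar s\rangle=\psi(\bar t)\psi^*(\bar s)$ for some $\bar t,\bar s\in\Omega_n$ if and only if $\bar s/|\!|\!|\bar s|\!|\!|_{\psi^*}\in \partial|\!|\!|\cdot|\!|\!|_{\psi} (\bar t)$ (here $|\!|\!|\cdot|\!|\!|_\psi$ and $|\!|\!|\cdot|\!|\!|_{\psi^*}$ are the corresponding norms on $\mathbb{R}^n$, i.e., with $X=\mathbb{R}$ and the absolute value); (v) $\psi(t)=\max_{s\in\Omega_n}\frac{\langle t,s\rangle}{\psi^*(s)}$ for all $t\in\Omega_n$.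
   Context: Let $(X,\|\cdot\|)$ be a normed vector space, $n\ge2$, $\mathbb{S}_{X^*}$ the unit sphere of $X^*$, $(X^n)^*\cong(X^* )^n$. $\Omega_n:=\{t\in\mathbb{R}^n\mid t_i\ge0,\ \sum_i t_i=1\}$, $\Omega_n^\circ:=\{t\in\Omega_n\mid t_i<1\ \forall i\}$. $\mathbf{\Psi}_n$ is the class of convex continuous $\psi:\Omega_n\to\mathbb{R}$ with (B1) $\psi(\mathbf{e}_i)=1$ for all standard unit vectors $\mathbf{e}_i$ and (B2) $\psi(t)\ge(1-t_i)\psi\big(\frac{t_1}{1-t_i},\ldots,\frac{t_{i-1}}{1-t_i},0,\frac{t_{i+1}}{1-t_i},\ldots,\frac{t_n}{1-t_i}\big)$ for all $t\in\Omega_n^\circ$, $i=1,\ldots,n$; $\mathbf{\Psi}^{\rm sc}_n$ is its strictly convex subclass. For $\psi\in\mathbf{\Psi}_n$, $|\!|\!|x|\!|\!|_\psi:=\big(\sum_{i}\|x_i\|\big)\,\psi\big(\frac{\|x_1\|}{\sum_{i}\|x_i\|},\ldots,\frac{\|x_n\|}{\sum_{i}\|x_i\|}\big)$ for $x\ne0$, $|\!|\!|0|\!|\!|_\psi:=0$. Its dual norm on $(X^n)^*$ is $|\!|\!|(x_1^*,\ldots,x_n^* )|\!|\!|_{\psi^*}=\max_{t\in\Omega_n}\frac{\sum_i t_i\|x_i^*\|}{\psi(t)}$, which coincides with the analogous construction using $\psi^*$ and the dual norm $\|\cdot\|_{X^*}$. $\mathbf{N}^{\rm sc}_{(X^n)^*}$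 is the family of strictly convex norms $|\!|\!|\cdot|\!|\!|$ on $(X^* )^n$ satisfying sign-symmetry $|\!|\!|(x^*_1,\ldots,x^*_n)|\!|\!|=|\!|\!|(\pm x^*_1,\ldots,\pm x^*_n)|\!|\!|$ and compatibility $|\!|\!|(0,\ldots,0,v^*,0,\ldots,0)|\!|\!|=\|v^*\|$ for all $v^*\in X^*$ in any position. $\partial$ denotes the convex subdifferential. *)

theory Defs
  imports "HOL-Analysis.Analysis"
begin

definition OmegaN :: "(real^'n) set" where
  "OmegaN = {t. (\<forall>i. 0 \<le> t$i) \<and> (\<Sum>i\<in>UNIV. t$i) = 1}"

definition OmegaO :: "(real^'n) set" where
  "OmegaO = {t \<in> OmegaN. \<forall>i. t$i < 1}"

definition strictly_convex_fun_on :: "'b::real_vector set \<Rightarrow> ('b \<Rightarrow> real) \<Rightarrow> bool" where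
  "strictly_convex_fun_on S f \<longleftrightarrow> convex_on S f \<and>
     (\<forall>x\<in>S. \<forall>y\<in>S. \<forall>u::real. x \<noteq> y \<and> 0 < u \<and> u < 1 \<longrightarrow>
        f (u *\<^sub>R x + (1 - u) *\<^sub>R y) < u * f x + (1 - u) * f y)"

definition Psi :: "((real^'n) \<Rightarrow> real) set" where
  "Psi = {\<psi>. convex_on OmegaN \<psi> \<and> continuous_on OmegaN \<psi> \<and>
      (\<forall>i. \<psi> (axis i 1) = 1) \<and>
      (\<forall>t\<in>OmegaO. \<forall>i. \<psi> t \<ge> (1 - t$i) *
           \<psi> (\<chi> j. if j = i then 0 else t$j / (1 - t$i)))}"

definition Psi_sc :: "((real^'n) \<Rightarrow> real) set" where
  "Psi_sc = {\<psi>\<in>Psi. strictly_convex_fun_on OmegaN \<psi>}"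

definition psi_star :: "((real^'n) \<Rightarrow> real) \<Rightarrow> (real^'n) \<Rightarrow> real" where
  "psi_star \<psi> s = (SUP t\<in>OmegaN. (t \<bullet> s) / \<psi> t)"

text \<open>The psi-norm on X^n (X any real normed space; X = real gives the norm on R^n).\<close>
definition psi_norm :: "((real^'n) \<Rightarrow> real) \<Rightarrow> ('a::real_normed_vector)^'n \<Rightarrow> real" where
  "psi_norm \<psi> x = (if x = 0 then 0 else
     (\<Sum>i\<in>UNIV. norm (x$i)) * \<psi> (\<chi> i. norm (x$i) / (\<Sum>j\<in>UNIV. norm (x$j))))"

text \<open>The dual norm of psi_norm on (X^n)^* = (X^*)^n, X^* = bounded linear functionals,
  given by the formula max over t in Omega_n of (sum_i t_i ||x_i^*||)/psi(t).\<close>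
definition psi_dual_norm :: "((real^'n) \<Rightarrow> real) \<Rightarrow> ('a::real_normed_vector \<Rightarrow>\<^sub>L real)^'n \<Rightarrow> real" where
  "psi_dual_norm \<psi> f = (SUP t\<in>OmegaN. (\<Sum>i\<in>UNIV. t$i * norm (f$i)) / \<psi> t)"

definition is_norm :: "('b::real_vector \<Rightarrow> real) \<Rightarrow> bool" where
  "is_norm N \<longleftrightarrow> (\<forall>x. N x = 0 \<longleftrightarrow> x = 0) \<and> (\<forall>x y. N (x + y) \<le> N x + N y) \<and>
     (\<forall>c x. N (c *\<^sub>R x) = \<bar>c\<bar> * N x)"

definition strictly_convex_norm :: "('b::real_vector \<Rightarrow> real) \<Rightarrow> bool" where
  "strictly_convex_norm N \<longleftrightarrow>
     (\<forall>x y. N x = 1 \<and> N y = 1 \<and> x \<noteq> y \<longrightarrow> N ((1/2) *\<^sub>R (x + y)) < 1)"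

definition Nsc :: "(('b::real_normed_vector)^'n \<Rightarrow> real) set" where
  "Nsc = {N. is_norm N \<and> strictly_convex_norm N \<and>
      (\<forall>x (\<epsilon>::'n \<Rightarrow> real). (\<forall>i. \<epsilon> i = 1 \<or> \<epsilon> i = -1) \<longrightarrow> N (\<chi> i. \<epsilon> i *\<^sub>R x$i) = N x) \<and>
      (\<forall>i v. N (\<chi> j. if j = i then v else 0) = norm v)}"

definition subdiff :: "('b::real_inner \<Rightarrow> real) \<Rightarrow> 'b \<Rightarrow> 'b set" where
  "subdiff f x = {g. \<forall>y. f y \<ge> f x + g \<bullet> (y - x)}"

end

theory Submission
  imports Defs
begin

(*
  psi^* is sublinear and monotone on R^n with psi^*(e_i) = 1, and the dual norm of |||.|||_psi
  is psi^* applied to the vector of component norms: this gives (i) and (iii).  Convexity and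
  (B2) make the homogeneous extension |||.|||_psi of psi monotone on the nonnegative orthant, so
  Hahn-Banach for x |-> |||x^+|||_psi yields for every t in Omega_n some s in Omega_n with
  <t,s> = psi(t) psi^*(s); together with <y,s> <= |||y|||_psi psi^*(s) this gives (iv) and (v).
  For (ii), strict convexity of psi^* on Omega_n amounts to strict convexity of its unit sphere
  in the nonnegative orthant, which the dual norm sees along c |-> (c_i e)_i for a unit
  functional e on X (Hahn-Banach again); strict convexity of the norm of X^* is seen in a
  single coordinate.
*)

lemma cINF_mult_left:
  fixes f :: "'b \<Rightarrow> real"
  assumes "0 < c" "A \<noteq> {}" "bdd_below (f ` A)"
  shows "(INF x\<in>A. c * f x) = c * (INF x\<in>A. f x)"
proof (rule antisym)
  obtain M where "\<And>x. x \<in> A \<Longrightarrow> M \<le> f x"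
    using assms(3) by (auto simp: bdd_below_def)
  then have "bdd_below ((\<lambda>x. c * f x) ` A)"
    using assms(1) by (intro bdd_belowI2[where m = "c * M"]) simp
  then have "(INF x\<in>A. c * f x) / c \<le> (INF x\<in>A. f x)"
    using assms(1,2) by (intro cINF_greatest) (auto simp: divide_le_eq mult.commute intro: cINF_lower)
  then show "(INF x\<in>A. c * f x) \<le> c * (INF x\<in>A. f x)"
    using assms(1) by (simp add: divide_le_eq mult.commute)
  show "c * (INF x\<in>A. f x) \<le> (INF x\<in>A. c * f x)"
    using assms by (intro cINF_greatest) (auto intro: mult_left_mono cINF_lower)
qed

definition sublinear :: "('a::real_vector \<Rightarrow> real) \<Rightarrow> bool" where
  "sublinear q \<longleftrightarrow> (\<forall>x y. q (x + y) \<le> q x + q y) \<and> (\<forall>c x. 0 \<le> c \<longrightarrow> q (c *\<^sub>R x) = c * q x)"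

lemma sublinear_add_le: "sublinear q \<Longrightarrow> q (x + y) \<le> q x + q y"
  by (simp add: sublinear_def)

lemma sublinear_scaleR: "sublinear q \<Longrightarrow> 0 \<le> c \<Longrightarrow> q (c *\<^sub>R x) = c * q x"
  by (simp add: sublinear_def)

lemma sublinear_0: "sublinear q \<Longrightarrow> q 0 = 0"
  using sublinear_scaleR[of q 0 0] by simp

lemma sublinear_minus_le: "sublinear q \<Longrightarrow> - q (- x) \<le> q x"
  using sublinear_add_le[of q x "- x"] sublinear_0[of q] by simp

lemma sublinear_convex_on:
  assumes "sublinear q" "convex S"
  shows "convex_on S q"
  unfolding convex_on_def
  using assms sublinear_add_le[OF assms(1)] sublinear_scaleR[OF assms(1)] by metis

lemma sublinear_linearI:
  assumes q: "sublinear q" and odd: "\<And>y. q (- y) \<le> - q y"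
  shows "linear q"
proof -
  have minus: "q (- y) = - q y" for y
    using odd[of y] sublinear_minus_le[OF q, of y] by simp
  have "q (x + y) = q x + q y" for x y
    using sublinear_add_le[OF q, of x y] sublinear_add_le[OF q, of "- x" "- y"] minus[of "x + y"]
    by (simp add: minus)
  moreover have "q (c *\<^sub>R x) = c * q x" for c x
  proof (cases "0 \<le> c")
    case True
    then show ?thesis by (rule sublinear_scaleR[OF q])
  next
    case False
    then have "q (c *\<^sub>R x) = q ((- c) *\<^sub>R (- x))" by simp
    also have "\<dots> = c * q x" using False sublinear_scaleR[OF q, of "- c" "- x"] by (simp add: minus)
    finally show ?thesis .
  qed
  ultimately show ?thesis by (intro linearI) auto
qed

(* reduce_along q y is a sublinear minorant of q with value at most -q(y) at -y.  A minimal
   sublinear functional m is therefore odd, i.e. linear; Zorn's lemma yields one below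
   reduce_along p y, and it agrees with p at y. *)
definition reduce_along :: "('a::real_vector \<Rightarrow> real) \<Rightarrow> 'a \<Rightarrow> 'a \<Rightarrow> real" where
  "reduce_along q y x = (INF s\<in>{0..}. q (x + s *\<^sub>R y) - s * q y)"

lemma bdd_below_reduce_along:
  assumes q: "sublinear q"
  shows "bdd_below ((\<lambda>s. q (x + s *\<^sub>R y) - s * q y) ` {0..})"
proof (rule bdd_belowI2[where m = "- q (- x)"])
  fix s :: real assume "s \<in> {0..}"
  then show "- q (- x) \<le> q (x + s *\<^sub>R y) - s * q y"
    using sublinear_add_le[OF q, of "x + s *\<^sub>R y" "- x"] sublinear_scaleR[OF q, of s y] by simp
qed

lemma reduce_along_le_term: "sublinear q \<Longrightarrow> 0 \<le> s \<Longrightarrow> reduce_along q y x \<le> q (x + s *\<^sub>R y) - s * q y"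
  unfolding reduce_along_def by (rule cINF_lower[OF bdd_below_reduce_along]) auto

lemma reduce_along_greatest:
  "(\<And>s. 0 \<le> s \<Longrightarrow> m \<le> q (x + s *\<^sub>R y) - s * q y) \<Longrightarrow> m \<le> reduce_along q y x"
  unfolding reduce_along_def by (rule cINF_greatest) auto

lemma reduce_along_le: "sublinear q \<Longrightarrow> reduce_along q y x \<le> q x"
  using reduce_along_le_term[of q 0 y x] by simp

lemma reduce_along_minus: "sublinear q \<Longrightarrow> reduce_along q y (- y) \<le> - q y"
  using reduce_along_le_term[of q 1 y "- y"] sublinear_0[of q] by simp

lemma reduce_along_add_le:
  assumes q: "sublinear q"
  shows "reduce_along q y (x1 + x2) \<le> reduce_along q y x1 + reduce_along q y x2"
proof -
  let ?r = "reduce_along q y"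
  have "?r (x1 + x2) - (q (x2 + s2 *\<^sub>R y) - s2 * q y) \<le> ?r x1" if "0 \<le> s2" for s2
  proof (rule reduce_along_greatest)
    fix s1 :: real assume "0 \<le> s1"
    then have "?r (x1 + x2) \<le> q ((x1 + s1 *\<^sub>R y) + (x2 + s2 *\<^sub>R y)) - (s1 + s2) * q y"
      using reduce_along_le_term[OF q, of "s1 + s2" y "x1 + x2"] that
      by (simp add: algebra_simps)
    also have "\<dots> \<le> q (x1 + s1 *\<^sub>R y) + q (x2 + s2 *\<^sub>R y) - (s1 + s2) * q y"
      using sublinear_add_le[OF q] by simp
    finally show "?r (x1 + x2) - (q (x2 + s2 *\<^sub>R y) - s2 * q y) \<le> q (x1 + s1 *\<^sub>R y) - s1 * q y"
      by (simp add: algebra_simps)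
  qed
  then have "?r (x1 + x2) - ?r x1 \<le> ?r x2"
    by (intro reduce_along_greatest) (simp add: algebra_simps)
  then show ?thesis by simp
qed

lemma reduce_along_scaleR:
  assumes q: "sublinear q" and "0 \<le> c"
  shows "reduce_along q y (c *\<^sub>R x) = c * reduce_along q y x"
proof (cases "c = 0")
  case True
  have "reduce_along q y 0 = (INF s\<in>{0::real..}. 0)"
    unfolding reduce_along_def using sublinear_scaleR[OF q] by (intro INF_cong) auto
  then show ?thesis using True by simp
next
  case False
  with \<open>0 \<le> c\<close> have c: "0 < c" by simp
  have img: "(\<lambda>s. c * s) ` {0..} = {0::real..}"
  proof
    show "(\<lambda>s. c * s) ` {0..} \<subseteq> {0..}" using c by auto
    show "{0..} \<subseteq> (\<lambda>s. c * s) ` {0..}"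
    proof
      fix s :: real assume "s \<in> {0..}"
      then show "s \<in> (\<lambda>s. c * s) ` {0..}" using c by (intro image_eqI[of _ _ "s / c"]) auto
    qed
  qed
  have "reduce_along q y (c *\<^sub>R x) = (INF s\<in>{0..}. q (c *\<^sub>R x + (c * s) *\<^sub>R y) - (c * s) * q y)"
    unfolding reduce_along_def by (subst img[symmetric]) (simp add: image_image)
  also have "\<dots> = (INF s\<in>{0..}. c * (q (x + s *\<^sub>R y) - s * q y))"
  proof (rule INF_cong)
    fix s :: real
    have "c *\<^sub>R x + (c * s) *\<^sub>R y = c *\<^sub>R (x + s *\<^sub>R y)"
      by (simp add: scaleR_add_right)
    then show "q (c *\<^sub>R x + (c * s) *\<^sub>R y) - (c * s) * q y = c * (q (x + s *\<^sub>R y) - s * q y)"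
      using c sublinear_scaleR[OF q, of c "x + s *\<^sub>R y"] by (simp add: algebra_simps)
  qed simp
  also have "\<dots> = c * reduce_along q y x"
    unfolding reduce_along_def using c bdd_below_reduce_along[OF q] by (intro cINF_mult_left) auto
  finally show ?thesis .
qed

lemma sublinear_reduce_along: "sublinear q \<Longrightarrow> sublinear (reduce_along q y)"
  by (simp add: sublinear_def reduce_along_add_le reduce_along_scaleR)

lemma linear_if_minimal_sublinear:
  assumes m: "sublinear m" and minimal: "\<And>q. sublinear q \<Longrightarrow> q \<le> m \<Longrightarrow> q = m"
  shows "linear m"
proof (rule sublinear_linearI[OF m])
  fix y
  have "reduce_along m y = m"
    using minimal sublinear_reduce_along[OF m] reduce_along_le[OF m] by (simp add: le_fun_def)
  then show "m (- y) \<le> - m y" using reduce_along_minus[OF m, of y] by simp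
qed

lemma bdd_below_sublinear_below:
  assumes "\<And>q. q \<in> C \<Longrightarrow> sublinear q \<and> q \<le> r"
  shows "bdd_below ((\<lambda>q. q x) ` C)"
proof (rule bdd_belowI2[where m = "- r (- x)"])
  fix q assume "q \<in> C"
  then have "sublinear q" "q (- x) \<le> r (- x)"
    using assms by (auto simp: le_fun_def)
  then show "- r (- x) \<le> q x"
    using sublinear_minus_le[of q x] by linarith
qed

lemma sublinear_INF_chain:
  assumes C: "C \<noteq> {}" and sub: "\<And>q. q \<in> C \<Longrightarrow> sublinear q \<and> q \<le> r"
    and chain: "\<And>p q. p \<in> C \<Longrightarrow> q \<in> C \<Longrightarrow> p \<le> q \<or> q \<le> p"
  shows "sublinear (\<lambda>x. INF q\<in>C. q x)"
  unfolding sublinear_def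
proof (intro conjI allI impI)
  let ?u = "\<lambda>x. INF q\<in>C. q x"
  have lower: "?u x \<le> q x" if "q \<in> C" for q x
    using bdd_below_sublinear_below[OF sub] that by (rule cINF_lower)
  have greatest: "m \<le> ?u x" if "\<And>q. q \<in> C \<Longrightarrow> m \<le> q x" for m x
    using C that by (rule cINF_greatest)
  fix x y
  have same: "?u (x + y) \<le> p x + p y" if "p \<in> C" for p
    using lower[OF that, of "x + y"] sublinear_add_le[of p x y] sub[OF that] by linarith
  have "?u (x + y) \<le> a x + b y" if "a \<in> C" "b \<in> C" for a b
  proof (cases "a \<le> b")
    case True
    then show ?thesis using same[OF that(1)] le_funD[OF True, of y] by linarith
  next
    case False
    then have "b \<le> a" using chain[OF that] by blast
    then show ?thesis using same[OF that(2)] le_funD[OF \<open>b \<le> a\<close>, of x] by linarith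
  qed
  then have "?u (x + y) - b y \<le> ?u x" if "b \<in> C" for b
    using that by (intro greatest) (simp add: algebra_simps)
  then have "?u (x + y) - ?u x \<le> ?u y"
    by (intro greatest) (simp add: algebra_simps)
  then show "?u (x + y) \<le> ?u x + ?u y" by simp
next
  fix c :: real and x assume "0 \<le> c"
  then have "(INF q\<in>C. q (c *\<^sub>R x)) = (INF q\<in>C. c * q x)"
    using sub sublinear_scaleR by (intro INF_cong) auto
  also have "\<dots> = c * (INF q\<in>C. q x)"
    using \<open>0 \<le> c\<close> C bdd_below_sublinear_below[OF sub]
    by (cases "c = 0") (simp_all add: cINF_mult_left)
  finally show "(INF q\<in>C. q (c *\<^sub>R x)) = c * (INF q\<in>C. q x)" .
qed

lemma exists_minimal_sublinear_below:
  assumes "sublinear r"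
  obtains m where "sublinear m" "m \<le> r" "\<And>q. sublinear q \<Longrightarrow> q \<le> m \<Longrightarrow> q = m"
proof -
  define A where "A = {q. sublinear q \<and> q \<le> r}"
  have "\<exists>m\<in>A. \<forall>q\<in>A. q \<le> m \<longrightarrow> q = m"
  proof (rule predicate_Zorn)
    show "partial_order_on A (relation_of (\<lambda>a b. b \<le> a) A)"
      by (rule partial_order_on_relation_ofI) (blast intro: order.trans order.antisym)+
  next
    fix C assume C: "C \<in> Chains (relation_of (\<lambda>a b. b \<le> a) A)"
    then have sub: "\<And>q. q \<in> C \<Longrightarrow> sublinear q \<and> q \<le> r"
      using Chains_relation_of by (auto simp: A_def)
    have chain: "\<And>a b. a \<in> C \<Longrightarrow> b \<in> C \<Longrightarrow> a \<le> b \<or> b \<le> a"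
      using C unfolding Chains_def relation_of_def by blast
    show "\<exists>u\<in>A. \<forall>a\<in>C. u \<le> a"
    proof (cases "C = {}")
      case False
      let ?u = "\<lambda>x. INF q\<in>C. q x"
      have "?u \<le> a" if "a \<in> C" for a
        using cINF_lower[OF bdd_below_sublinear_below[OF sub] that] by (simp add: le_fun_def)
      moreover obtain a where "a \<in> C" using False by blast
      then have "?u \<le> r"
        using calculation sub by (meson order.trans)
      then have "?u \<in> A"
        using sublinear_INF_chain[OF False sub chain] by (simp add: A_def)
      ultimately show ?thesis by blast
    qed (use assms in \<open>auto simp: A_def\<close>)
  qed
  then show ?thesis
    using that unfolding A_def by (blast intro: order.trans)
qed

theorem hahn_banach_sublinear:
  fixes p :: "'a::real_vector \<Rightarrow> real"
  assumes p: "sublinear p"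
  obtains f where "linear f" "\<And>x. f x \<le> p x" "f y = p y"
proof -
  obtain m where m: "sublinear m" "m \<le> reduce_along p y"
    and minimal: "\<And>q. sublinear q \<Longrightarrow> q \<le> m \<Longrightarrow> q = m"
    using exists_minimal_sublinear_below[OF sublinear_reduce_along[OF p]] by blast
  have "linear m"
    using m(1) minimal by (rule linear_if_minimal_sublinear)
  moreover have "m x \<le> p x" for x
    using le_funD[OF m(2), of x] reduce_along_le[OF p, of y x] by linarith
  moreover have "p y \<le> m y"
    using linear_neg[OF \<open>linear m\<close>, of y] le_funD[OF m(2), of "- y"] reduce_along_minus[OF p, of y]
    by linarith
  ultimately show ?thesis
    using that by (metis order.antisym)
qed

lemma OmegaN_nonneg: "t \<in> OmegaN \<Longrightarrow> 0 \<le> t$i"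
  by (simp add: OmegaN_def)

lemma OmegaN_nonneg_vec: "t \<in> OmegaN \<Longrightarrow> 0 \<le> t"
  by (simp add: OmegaN_def less_eq_vec_def)

lemma OmegaN_sum: "t \<in> OmegaN \<Longrightarrow> (\<Sum>i\<in>UNIV. t$i) = 1"
  by (simp add: OmegaN_def)

lemma OmegaN_le_1: "t \<in> OmegaN \<Longrightarrow> t$i \<le> 1"
  using member_le_sum[of i UNIV "\<lambda>i. t$i"] by (simp add: OmegaN_def)

lemma axis_in_OmegaN: "axis i 1 \<in> OmegaN"
  by (simp add: OmegaN_def axis_def)

lemma OmegaN_nonempty: "OmegaN \<noteq> {}"
  using axis_in_OmegaN by blast

lemma OmegaN_nonzero: "t \<in> OmegaN \<Longrightarrow> t \<noteq> 0"
  by (auto simp: OmegaN_def)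

lemma OmegaN_ex_pos:
  assumes "t \<in> OmegaN"
  obtains k where "0 < t$k"
proof -
  have "\<not> (\<forall>k. t$k \<le> 0)"
    using OmegaN_sum[OF assms] sum_nonpos[of UNIV "\<lambda>k. t$k"] by auto
  then show ?thesis using that by (meson not_le)
qed

lemma convex_OmegaN: "convex OmegaN"
  unfolding convex_def OmegaN_def
  by (auto simp: sum.distrib sum_distrib_left[symmetric])

lemma OmegaN_eq_axis:
  assumes t: "t \<in> OmegaN" and "t$i = 1"
  shows "t = axis i 1"
proof -
  have "t$j = 0" if "j \<noteq> i" for j
  proof -
    have "(\<Sum>l\<in>{i, j}. t$l) \<le> (\<Sum>l\<in>UNIV. t$l)"
      by (rule sum_mono2) (auto simp: OmegaN_nonneg[OF t])
    then show ?thesis using that assms OmegaN_nonneg[OF t, of j] by (simp add: OmegaN_sum)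
  qed
  then show ?thesis using assms by (auto simp: vec_eq_iff axis_def)
qed

lemma OmegaN_drop_coordinate:
  assumes t: "t \<in> OmegaN" and "t$i < 1"
  shows "(\<chi> j. if j = i then 0 else t$j / (1 - t$i)) \<in> OmegaN"
proof -
  have "(\<Sum>j\<in>UNIV. if j = i then 0 else t$j) = 1 - t$i"
    using OmegaN_sum[OF t] sum.remove[of UNIV i "\<lambda>j. t$j"] by (simp add: sum.If_cases Compl_eq_Diff_UNIV)
  moreover have "(\<Sum>j\<in>UNIV. if j = i then 0 else t$j / (1 - t$i))
      = (\<Sum>j\<in>UNIV. if j = i then 0 else t$j) / (1 - t$i)"
    unfolding sum_divide_distrib by (rule sum.cong) auto
  ultimately have "(\<Sum>j\<in>UNIV. if j = i then 0 else t$j / (1 - t$i)) = 1"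
    using assms(2) by simp
  then show ?thesis
    using assms OmegaN_nonneg[OF t] by (simp add: OmegaN_def)
qed

lemma nonneg_eq_scaleR_OmegaN:
  fixes y :: "real^'n"
  assumes "0 \<le> y" "y \<noteq> 0"
  obtains c t where "0 < c" "t \<in> OmegaN" "y = c *\<^sub>R t"
proof
  let ?c = "\<Sum>i\<in>UNIV. y$i"
  have "?c \<noteq> 0"
    using assms by (subst sum_nonneg_eq_0_iff) (auto simp: less_eq_vec_def vec_eq_iff)
  then show "0 < ?c"
    using assms by (simp add: less_eq_vec_def sum_nonneg order_less_le)
  then show "(1 / ?c) *\<^sub>R y \<in> OmegaN" "y = ?c *\<^sub>R ((1 / ?c) *\<^sub>R y)"
    using assms by (simp_all add: OmegaN_def less_eq_vec_def sum_divide_distrib[symmetric])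
qed

lemma psi_norm_scaleR:
  fixes x :: "'a::real_normed_vector^'n"
  shows "psi_norm \<psi> (c *\<^sub>R x) = \<bar>c\<bar> * psi_norm \<psi> x"
proof (cases "c = 0 \<or> x = 0")
  case False
  then show ?thesis
    by (simp add: psi_norm_def sum_distrib_left[symmetric])
qed (auto simp: psi_norm_def)

lemma psi_norm_OmegaN: "t \<in> OmegaN \<Longrightarrow> psi_norm \<psi> t = \<psi> t"
  using OmegaN_nonzero[of t] by (simp add: psi_norm_def OmegaN_nonneg OmegaN_sum vec_eq_iff[symmetric])

lemma psi_norm_scaleR_OmegaN: "t \<in> OmegaN \<Longrightarrow> 0 \<le> c \<Longrightarrow> psi_norm \<psi> (c *\<^sub>R t) = c * \<psi> t"
  by (simp add: psi_norm_scaleR psi_norm_OmegaN)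

lemma psi_norm_add_le:
  fixes a b :: "real^'n"
  assumes conv: "convex_on OmegaN \<psi>" and "0 \<le> a" "0 \<le> b"
  shows "psi_norm \<psi> (a + b) \<le> psi_norm \<psi> a + psi_norm \<psi> b"
proof (cases "a = 0 \<or> b = 0")
  case True
  then show ?thesis by (auto simp: psi_norm_def)
next
  case False
  then obtain \<alpha> p \<beta> q where "0 < \<alpha>" "p \<in> OmegaN" and a: "a = \<alpha> *\<^sub>R p"
    and "0 < \<beta>" "q \<in> OmegaN" and b: "b = \<beta> *\<^sub>R q"
    using assms nonneg_eq_scaleR_OmegaN by metis
  define u where "u = \<beta> / (\<alpha> + \<beta>)"
  have u: "0 \<le> u" "u \<le> 1"
    using \<open>0 < \<alpha>\<close> \<open>0 < \<beta>\<close> by (simp_all add: u_def)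
  have 1: "(\<alpha> + \<beta>) * (1 - u) = \<alpha>" and 2: "(\<alpha> + \<beta>) * u = \<beta>"
    using \<open>0 < \<alpha>\<close> \<open>0 < \<beta>\<close> by (simp_all add: u_def field_simps)
  then have ab: "a + b = (\<alpha> + \<beta>) *\<^sub>R ((1 - u) *\<^sub>R p + u *\<^sub>R q)"
    by (simp add: a b scaleR_add_right)
  have "psi_norm \<psi> (a + b) = (\<alpha> + \<beta>) * \<psi> ((1 - u) *\<^sub>R p + u *\<^sub>R q)"
    unfolding ab using \<open>0 < \<alpha>\<close> \<open>0 < \<beta>\<close> \<open>p \<in> OmegaN\<close> \<open>q \<in> OmegaN\<close> u convex_OmegaN
    by (intro psi_norm_scaleR_OmegaN) (auto simp: convex_def)
  also have "\<dots> \<le> (\<alpha> + \<beta>) * ((1 - u) * \<psi> p + u * \<psi> q)"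
    using convex_onD[OF conv u] \<open>p \<in> OmegaN\<close> \<open>q \<in> OmegaN\<close> \<open>0 < \<alpha>\<close> \<open>0 < \<beta>\<close>
    by (intro mult_left_mono) auto
  also have "\<dots> = \<alpha> * \<psi> p + \<beta> * \<psi> q"
    unfolding distrib_left mult.assoc[symmetric] 1 2 ..
  also have "\<dots> = psi_norm \<psi> a + psi_norm \<psi> b"
    using \<open>0 < \<alpha>\<close> \<open>0 < \<beta>\<close> \<open>p \<in> OmegaN\<close> \<open>q \<in> OmegaN\<close>
    by (simp add: a b psi_norm_scaleR_OmegaN)
  finally show ?thesis .
qed

lemma psi_norm_drop_coordinate_le:
  fixes y :: "real^'n"
  assumes psi: "\<psi> \<in> Psi" and "0 \<le> y"
  shows "psi_norm \<psi> (\<chi> j. if j = i then 0 else y$j) \<le> psi_norm \<psi> y"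
proof (cases "y$i = 0")
  case True
  then have "(\<chi> j. if j = i then 0 else y$j) = y" by (auto simp: vec_eq_iff)
  then show ?thesis by simp
next
  case False
  then obtain c t where c: "0 < c" and t: "t \<in> OmegaN" and y: "y = c *\<^sub>R t"
    using assms(2) nonneg_eq_scaleR_OmegaN by (metis zero_index)
  have ti: "0 < t$i"
    using False OmegaN_nonneg[OF t, of i] c y by (auto simp: order_less_le)
  show ?thesis
  proof (cases "t = axis i 1")
    case True
    then have "(\<chi> j. if j = i then 0 else y$j) = 0" by (simp add: y vec_eq_iff axis_def)
    moreover have "psi_norm \<psi> y = c"
      using psi c True by (simp add: y psi_norm_scaleR_OmegaN axis_in_OmegaN Psi_def)
    ultimately show ?thesis
      using c by (simp add: psi_norm_def)
  next
    case False
    have t1: "t$j < 1" for j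
      using OmegaN_le_1[OF t, of j] OmegaN_eq_axis[OF t, of j] False ti
      by (cases "j = i") (auto simp: order_less_le axis_def)
    then have "t \<in> OmegaO" using t by (simp add: OmegaO_def)
    let ?t' = "\<chi> j. if j = i then 0 else t$j / (1 - t$i)"
    have "(\<chi> j. if j = i then 0 else y$j) = (c * (1 - t$i)) *\<^sub>R ?t'"
      using t1[of i] by (simp add: y vec_eq_iff)
    then have "psi_norm \<psi> (\<chi> j. if j = i then 0 else y$j) = c * ((1 - t$i) * \<psi> ?t')"
      using OmegaN_drop_coordinate[OF t t1] c t1[of i] by (simp add: psi_norm_scaleR_OmegaN)
    also have "\<dots> \<le> c * \<psi> t"
      using psi \<open>t \<in> OmegaO\<close> c by (intro mult_left_mono) (auto simp: Psi_def)
    also have "\<dots> = psi_norm \<psi> y"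
      using c t by (simp add: y psi_norm_scaleR_OmegaN)
    finally show ?thesis .
  qed
qed

(* y - delta e_i lies on the segment between y and y with its i-th coordinate dropped *)
lemma psi_norm_minus_axis_le:
  fixes y :: "real^'n"
  assumes psi: "\<psi> \<in> Psi" and y: "0 \<le> y" and "0 \<le> \<delta>" "\<delta> \<le> y$i"
  shows "psi_norm \<psi> (y - \<delta> *\<^sub>R axis i 1) \<le> psi_norm \<psi> y"
proof (cases "\<delta> = 0")
  case False
  let ?z = "\<chi> j. if j = i then 0 else y$j"
  define l where "l = \<delta> / y$i"
  have l: "0 \<le> l" "l \<le> 1" and "0 < y$i"
    using assms False by (auto simp: l_def)
  have z: "0 \<le> ?z" using y by (simp add: less_eq_vec_def)
  have "y - \<delta> *\<^sub>R axis i 1 = l *\<^sub>R ?z + (1 - l) *\<^sub>R y"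
    using \<open>0 < y$i\<close> by (auto simp: vec_eq_iff axis_def l_def field_simps)
  then have "psi_norm \<psi> (y - \<delta> *\<^sub>R axis i 1) \<le> l * psi_norm \<psi> ?z + (1 - l) * psi_norm \<psi> y"
    using psi_norm_add_le[of \<psi> "l *\<^sub>R ?z" "(1 - l) *\<^sub>R y"] psi z y l
    by (simp add: Psi_def psi_norm_scaleR scaleR_nonneg_nonneg)
  also have "\<dots> \<le> l * psi_norm \<psi> y + (1 - l) * psi_norm \<psi> y"
    using psi_norm_drop_coordinate_le[OF psi y, of i] l by (simp add: mult_left_mono)
  finally show ?thesis by (simp add: algebra_simps)
qed simp

lemma psi_norm_mono:
  fixes a b :: "real^'n"
  assumes psi: "\<psi> \<in> Psi" and a: "0 \<le> a" and ab: "a \<le> b"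
  shows "psi_norm \<psi> a \<le> psi_norm \<psi> b"
proof -
  let ?mix = "\<lambda>S. \<chi> j. if j \<in> S then a$j else b$j"
  have "psi_norm \<psi> (?mix S) \<le> psi_norm \<psi> b" if "finite S" for S
    using that
  proof (induction S rule: finite_induct)
    case (insert i S)
    have "0 \<le> ?mix S"
      using a ab by (auto simp: less_eq_vec_def intro: order_trans)
    moreover have "?mix (insert i S) = ?mix S - (b$i - a$i) *\<^sub>R axis i 1"
      using insert.hyps by (auto simp: vec_eq_iff axis_def)
    ultimately have "psi_norm \<psi> (?mix (insert i S)) \<le> psi_norm \<psi> (?mix S)"
      using psi_norm_minus_axis_le[OF psi] a ab insert.hyps by (simp add: less_eq_vec_def)
    then show ?case using insert.IH by simp
  qed simp
  from this[of UNIV] show ?thesis by simp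
qed

lemma Psi_component_le:
  fixes t :: "real^'n"
  assumes psi: "\<psi> \<in> Psi" and t: "t \<in> OmegaN"
  shows "t$k \<le> \<psi> t"
proof -
  let ?e = "axis k 1 :: real^'n"
  have "0 \<le> t$k *\<^sub>R ?e" and "t$k *\<^sub>R ?e \<le> t"
    using OmegaN_nonneg[OF t] by (simp_all add: less_eq_vec_def axis_def)
  then have "psi_norm \<psi> (t$k *\<^sub>R ?e) \<le> psi_norm \<psi> t"
    by (rule psi_norm_mono[OF psi])
  moreover have "psi_norm \<psi> (t$k *\<^sub>R ?e) = t$k * \<psi> ?e"
    by (rule psi_norm_scaleR_OmegaN[OF axis_in_OmegaN OmegaN_nonneg[OF t]])
  ultimately show ?thesis
    using psi by (simp add: psi_norm_OmegaN[OF t] Psi_def)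
qed

lemma Psi_pos:
  assumes "\<psi> \<in> Psi" "t \<in> OmegaN"
  shows "0 < \<psi> t"
proof -
  obtain k where "0 < t$k"
    using OmegaN_ex_pos[OF assms(2)] by blast
  then show ?thesis using Psi_component_le[OF assms] by (meson order_less_le_trans)
qed

lemma inner_le_Psi_mult_sum_abs:
  assumes psi: "\<psi> \<in> Psi" and t: "t \<in> OmegaN"
  shows "t \<bullet> w \<le> \<psi> t * (\<Sum>i\<in>UNIV. \<bar>w$i\<bar>)"
proof -
  have "t \<bullet> w \<le> (\<Sum>i\<in>UNIV. t$i * \<bar>w$i\<bar>)"
    unfolding inner_vec_def using OmegaN_nonneg[OF t]
    by (intro sum_mono) (simp add: mult_left_mono)
  also have "\<dots> \<le> (\<Sum>i\<in>UNIV. \<psi> t * \<bar>w$i\<bar>)"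
    using Psi_component_le[OF psi t] by (intro sum_mono mult_right_mono) auto
  finally show ?thesis by (simp add: sum_distrib_left)
qed

lemma psi_star_upper:
  assumes psi: "\<psi> \<in> Psi" and t: "t \<in> OmegaN"
  shows "(t \<bullet> w) / \<psi> t \<le> psi_star \<psi> w"
proof -
  have "(t' \<bullet> w) / \<psi> t' \<le> (\<Sum>i\<in>UNIV. \<bar>w$i\<bar>)" if "t' \<in> OmegaN" for t'
    using inner_le_Psi_mult_sum_abs[OF psi that] Psi_pos[OF psi that]
    by (simp add: divide_le_eq mult.commute)
  then have "bdd_above ((\<lambda>t. (t \<bullet> w) / \<psi> t) ` OmegaN)"
    by (intro bdd_aboveI2)
  then show ?thesis
    unfolding psi_star_def using t by (rule cSUP_upper2) simp
qed

lemma psi_star_least: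
  "(\<And>t. t \<in> OmegaN \<Longrightarrow> (t \<bullet> w) / \<psi> t \<le> M) \<Longrightarrow> psi_star \<psi> w \<le> M"
  unfolding psi_star_def using OmegaN_nonempty by (rule cSUP_least)

lemma inner_le_mult_psi_star:
  assumes "\<psi> \<in> Psi" "t \<in> OmegaN"
  shows "t \<bullet> w \<le> \<psi> t * psi_star \<psi> w"
  using psi_star_upper[OF assms, of w] Psi_pos[OF assms] by (simp add: divide_le_eq mult.commute)

lemma sublinear_psi_star:
  fixes \<psi> :: "real^'n \<Rightarrow> real"
  assumes psi: "\<psi> \<in> Psi"
  shows "sublinear (psi_star \<psi>)"
  unfolding sublinear_def
proof (intro conjI allI impI)
  fix v w :: "real^'n"
  show "psi_star \<psi> (v + w) \<le> psi_star \<psi> v + psi_star \<psi> w"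
    using psi_star_upper[OF psi] by (intro psi_star_least) (simp add: inner_add_right add_divide_distrib add_mono)
next
  fix c :: real and w :: "real^'n" assume c: "0 \<le> c"
  have "psi_star \<psi> (c *\<^sub>R w) \<le> c * psi_star \<psi> w"
  proof (rule psi_star_least)
    fix t :: "real^'n" assume "t \<in> OmegaN"
    then have "c * ((t \<bullet> w) / \<psi> t) \<le> c * psi_star \<psi> w"
      using psi_star_upper[OF psi] c by (intro mult_left_mono)
    then show "(t \<bullet> (c *\<^sub>R w)) / \<psi> t \<le> c * psi_star \<psi> w" by simp
  qed
  moreover have "c * psi_star \<psi> w \<le> psi_star \<psi> (c *\<^sub>R w)"
  proof (cases "c = 0")
    case True
    then show ?thesis
      using psi_star_upper[OF psi axis_in_OmegaN, of _ "c *\<^sub>R w"] by simp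
  next
    case False
    then have "psi_star \<psi> w \<le> psi_star \<psi> (c *\<^sub>R w) / c"
      using psi_star_upper[OF psi, where w = "c *\<^sub>R w"] c
      by (intro psi_star_least) (simp add: le_divide_eq mult.commute)
    then show ?thesis using c False by (simp add: le_divide_eq mult.commute)
  qed
  ultimately show "psi_star \<psi> (c *\<^sub>R w) = c * psi_star \<psi> w" by simp
qed

lemma mono_psi_star:
  fixes \<psi> :: "real^'n \<Rightarrow> real"
  assumes psi: "\<psi> \<in> Psi"
  shows "mono (psi_star \<psi>)"
proof
  fix v w :: "real^'n" assume "v \<le> w"
  show "psi_star \<psi> v \<le> psi_star \<psi> w"
  proof (rule psi_star_least)
    fix t :: "real^'n" assume t: "t \<in> OmegaN"
    have "t \<bullet> v \<le> t \<bullet> w"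
      unfolding inner_vec_def using \<open>v \<le> w\<close> OmegaN_nonneg[OF t]
      by (intro sum_mono) (simp add: less_eq_vec_def mult_left_mono)
    then show "(t \<bullet> v) / \<psi> t \<le> psi_star \<psi> w"
      using Psi_pos[OF psi t] psi_star_upper[OF psi t, of w] by (meson divide_right_mono less_imp_le order_trans)
  qed
qed

lemma psi_star_component_le:
  assumes "\<psi> \<in> Psi"
  shows "w$k \<le> psi_star \<psi> w"
  using psi_star_upper[OF assms axis_in_OmegaN, of k w] assms by (simp add: Psi_def inner_axis')

lemma psi_star_axis:
  assumes psi: "\<psi> \<in> Psi"
  shows "psi_star \<psi> (axis i 1) = 1"
proof (rule antisym)
  show "psi_star \<psi> (axis i 1) \<le> 1"
    using Psi_component_le[OF psi] Psi_pos[OF psi] by (intro psi_star_least) (simp add: inner_axis)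
  show "1 \<le> psi_star \<psi> (axis i 1)"
    using psi_star_component_le[OF psi, of "axis i 1" i] by simp
qed

lemma psi_star_pos:
  assumes "\<psi> \<in> Psi" "s \<in> OmegaN"
  shows "0 < psi_star \<psi> s"
proof -
  obtain k where "0 < s$k"
    using OmegaN_ex_pos[OF assms(2)] by blast
  then show ?thesis using psi_star_component_le[OF assms(1)] by (meson order_less_le_trans)
qed

lemma Psi_if_sublinear_mono:
  fixes q :: "real^'n \<Rightarrow> real"
  assumes q: "sublinear q" and "mono q" and axis: "\<And>i. q (axis i 1) = 1"
  shows "q \<in> Psi"
proof -
  have "continuous_on UNIV q"
    using convex_on_continuous[OF open_UNIV sublinear_convex_on[OF q convex_UNIV]] .
  moreover have "(1 - s$i) * q (\<chi> j. if j = i then 0 else s$j / (1 - s$i)) \<le> q s"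
    if "s \<in> OmegaO" for s i
  proof -
    have s: "s \<in> OmegaN" "s$i < 1" using that by (auto simp: OmegaO_def)
    have "(1 - s$i) *\<^sub>R (\<chi> j. if j = i then 0 else s$j / (1 - s$i)) = (\<chi> j. if j = i then 0 else s$j)"
      using s(2) by (simp add: vec_eq_iff)
    moreover have "(1 - s$i) * q v = q ((1 - s$i) *\<^sub>R v)" for v
      using sublinear_scaleR[OF q, of "1 - s$i" v] s(2) by simp
    ultimately have "(1 - s$i) * q (\<chi> j. if j = i then 0 else s$j / (1 - s$i)) = q (\<chi> j. if j = i then 0 else s$j)"
      by simp
    also have "\<dots> \<le> q s"
      using OmegaN_nonneg[OF s(1)] by (intro monoD[OF \<open>mono q\<close>]) (simp add: less_eq_vec_def)
    finally show ?thesis .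
  qed
  ultimately show ?thesis
    using sublinear_convex_on[OF q convex_OmegaN] axis by (auto simp: Psi_def intro: continuous_on_subset)
qed

theorem psi_star_in_Psi:
  fixes \<psi> :: "real^'n \<Rightarrow> real"
  assumes "\<psi> \<in> Psi"
  shows "psi_star \<psi> \<in> Psi"
  using Psi_if_sublinear_mono sublinear_psi_star mono_psi_star psi_star_axis assms by blast

lemma inner_le_psi_norm_mult_psi_star:
  fixes y s :: "real^'n"
  assumes psi: "\<psi> \<in> Psi" and s: "0 \<le> s"
  shows "y \<bullet> s \<le> psi_norm \<psi> y * psi_star \<psi> s"
proof (cases "y = 0")
  case False
  let ?abs = "\<chi> i. \<bar>y$i\<bar>"
  have "0 \<le> ?abs" and abs_ne: "?abs \<noteq> 0"
    using False by (auto simp: less_eq_vec_def vec_eq_iff)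
  then obtain c t where c: "0 < c" and t: "t \<in> OmegaN" and abs: "?abs = c *\<^sub>R t"
    by (rule nonneg_eq_scaleR_OmegaN)
  have "y \<bullet> s \<le> ?abs \<bullet> s"
    unfolding inner_vec_def using s by (intro sum_mono) (simp add: less_eq_vec_def mult_right_mono)
  also have "\<dots> = c * (t \<bullet> s)" by (simp add: abs)
  also have "\<dots> \<le> c * \<psi> t * psi_star \<psi> s"
    using inner_le_mult_psi_star[OF psi t] c by (simp add: mult.assoc)
  also have "c * \<psi> t = psi_norm \<psi> ?abs"
    using psi_norm_scaleR_OmegaN[OF t, of c \<psi>] c by (simp add: abs)
  also have "\<dots> = psi_norm \<psi> y"
    using False abs_ne by (simp add: psi_norm_def)
  finally show ?thesis .
qed (simp add: psi_norm_def)

theorem dual_pair_iff_subgradient: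
  fixes \<psi> :: "real^'n \<Rightarrow> real"
  assumes psi: "\<psi> \<in> Psi" and t: "t \<in> OmegaN" and s: "s \<in> OmegaN"
  shows "t \<bullet> s = \<psi> t * psi_star \<psi> s \<longleftrightarrow>
    (1 / psi_norm (psi_star \<psi>) s) *\<^sub>R s \<in> subdiff (psi_norm \<psi> :: real^'n \<Rightarrow> real) t"
proof -
  let ?c = "psi_star \<psi> s"
  have c: "0 < ?c" by (rule psi_star_pos[OF psi s])
  have subgradient_ineq: "psi_norm \<psi> t + ((1 / ?c) *\<^sub>R s) \<bullet> (y - t) \<le> psi_norm \<psi> y
      \<longleftrightarrow> (\<psi> t * ?c - t \<bullet> s) + y \<bullet> s \<le> psi_norm \<psi> y * ?c" for y :: "real^'n"
    using c by (simp add: psi_norm_OmegaN[OF t] inner_diff_right inner_commute field_simps)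
  have le: "t \<bullet> s \<le> \<psi> t * ?c"
    by (rule inner_le_mult_psi_star[OF psi t])
  have subdiff_iff: "(1 / psi_norm (psi_star \<psi>) s) *\<^sub>R s \<in> subdiff (psi_norm \<psi>) t
      \<longleftrightarrow> (\<forall>y. (\<psi> t * ?c - t \<bullet> s) + y \<bullet> s \<le> psi_norm \<psi> y * ?c)"
    unfolding subdiff_def psi_norm_OmegaN[OF s] mem_Collect_eq subgradient_ineq ..
  show ?thesis
  proof
    assume "t \<bullet> s = \<psi> t * ?c"
    then show "(1 / psi_norm (psi_star \<psi>) s) *\<^sub>R s \<in> subdiff (psi_norm \<psi>) t"
      unfolding subdiff_iff
      using inner_le_psi_norm_mult_psi_star[OF psi OmegaN_nonneg_vec[OF s]] by simp
  next
    assume "(1 / psi_norm (psi_star \<psi>) s) *\<^sub>R s \<in> subdiff (psi_norm \<psi>) t"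
    then have "\<psi> t * ?c - t \<bullet> s \<le> 0"
      unfolding subdiff_iff by (metis add_0_right inner_zero_left psi_norm_def mult_zero_left)
    then show "t \<bullet> s = \<psi> t * ?c" using le by simp
  qed
qed

lemma linear_eq_inner_axis:
  fixes f :: "real^'n \<Rightarrow> real"
  assumes "linear f"
  shows "f x = (\<chi> i. f (axis i 1)) \<bullet> x"
proof -
  have "f x = f (\<Sum>i\<in>UNIV. x$i *\<^sub>R axis i 1)"
    using basis_expansion[of x] by (simp add: scalar_mult_eq_scaleR)
  also have "\<dots> = (\<Sum>i\<in>UNIV. x$i * f (axis i 1))"
    using assms by (simp add: linear_sum linear_scale)
  finally show ?thesis by (simp add: inner_vec_def mult.commute)
qed

lemma sublinear_psi_norm_pos_part:
  fixes \<psi> :: "real^'n \<Rightarrow> real"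
  assumes psi: "\<psi> \<in> Psi"
  shows "sublinear (\<lambda>x :: real^'n. psi_norm \<psi> (\<chi> i. max (x$i) 0))"
  unfolding sublinear_def
proof (intro conjI allI impI)
  fix x y :: "real^'n"
  have "psi_norm \<psi> (\<chi> i. max ((x + y)$i) 0) \<le> psi_norm \<psi> ((\<chi> i. max (x$i) 0) + (\<chi> i. max (y$i) 0))"
    by (rule psi_norm_mono[OF psi]) (auto simp: less_eq_vec_def)
  also have "\<dots> \<le> psi_norm \<psi> (\<chi> i. max (x$i) 0) + psi_norm \<psi> (\<chi> i. max (y$i) 0)"
    using psi by (intro psi_norm_add_le) (auto simp: Psi_def less_eq_vec_def)
  finally show "psi_norm \<psi> (\<chi> i. max ((x + y)$i) 0)
      \<le> psi_norm \<psi> (\<chi> i. max (x$i) 0) + psi_norm \<psi> (\<chi> i. max (y$i) 0)" .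
next
  fix c :: real and x :: "real^'n" assume "0 \<le> c"
  then have "(\<chi> i. max ((c *\<^sub>R x)$i) 0) = c *\<^sub>R (\<chi> i. max (x$i) 0)"
    by (simp add: vec_eq_iff max_mult_distrib_left)
  then show "psi_norm \<psi> (\<chi> i. max ((c *\<^sub>R x)$i) 0) = c * psi_norm \<psi> (\<chi> i. max (x$i) 0)"
    using \<open>0 \<le> c\<close> by (simp add: psi_norm_scaleR)
qed

(* x |-> |||x^+|||_psi agrees with psi on Omega_n and vanishes on the nonpositive orthant, so a
   linear minorant touching it at t is represented by a nonnegative vector. *)
lemma exists_supporting_vector:
  fixes \<psi> :: "real^'n \<Rightarrow> real"
  assumes psi: "\<psi> \<in> Psi" and t: "t \<in> OmegaN"
  obtains g :: "real^'n" where "0 \<le> g" "\<And>t'. t' \<in> OmegaN \<Longrightarrow> g \<bullet> t' \<le> \<psi> t'" "g \<bullet> t = \<psi> t"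
proof -
  let ?p = "\<lambda>x :: real^'n. psi_norm \<psi> (\<chi> i. max (x$i) 0)"
  have p_OmegaN: "?p t' = \<psi> t'" if "t' \<in> OmegaN" for t'
    using OmegaN_nonneg[OF that] psi_norm_OmegaN[OF that] by (simp add: max_absorb1 vec_eq_iff[symmetric])
  obtain f where "linear f" and f_le: "\<And>x. f x \<le> ?p x" and "f t = ?p t"
    using hahn_banach_sublinear[OF sublinear_psi_norm_pos_part[OF psi], of t] by blast
  define g where "g = (\<chi> i. f (axis i 1))"
  have f_eq: "f x = g \<bullet> x" for x
    unfolding g_def by (rule linear_eq_inner_axis[OF \<open>linear f\<close>])
  show ?thesis
  proof (rule that)
    have "f (- axis i 1) \<le> 0" for i
      using f_le[of "- axis i 1"] by (simp add: psi_norm_def vec_eq_iff axis_def cong: if_cong)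
    then show "0 \<le> g"
      using linear_neg[OF \<open>linear f\<close>] by (simp add: g_def less_eq_vec_def)
    show "g \<bullet> t' \<le> \<psi> t'" if "t' \<in> OmegaN" for t'
      using f_le[of t'] p_OmegaN[OF that] by (simp add: f_eq)
    show "g \<bullet> t = \<psi> t"
      using \<open>f t = ?p t\<close> p_OmegaN[OF t] by (simp add: f_eq)
  qed
qed

lemma exists_dual_pair:
  fixes \<psi> :: "real^'n \<Rightarrow> real"
  assumes psi: "\<psi> \<in> Psi" and t: "t \<in> OmegaN"
  obtains s where "s \<in> OmegaN" "t \<bullet> s = \<psi> t * psi_star \<psi> s"
proof -
  obtain g :: "real^'n" where g: "0 \<le> g" and g_le: "\<And>t'. t' \<in> OmegaN \<Longrightarrow> g \<bullet> t' \<le> \<psi> t'"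
    and g_t: "g \<bullet> t = \<psi> t"
    using exists_supporting_vector[OF psi t] by blast
  define G where "G = (\<Sum>i\<in>UNIV. g$i)"
  have "g \<bullet> t \<le> G"
    unfolding G_def inner_vec_def using g OmegaN_nonneg[OF t] OmegaN_le_1[OF t]
    by (intro sum_mono) (simp add: less_eq_vec_def mult_left_le)
  then have G: "0 < G" using g_t Psi_pos[OF psi t] by simp
  define s where "s = (1 / G) *\<^sub>R g"
  have s: "s \<in> OmegaN"
    using G g by (simp add: OmegaN_def s_def G_def less_eq_vec_def sum_divide_distrib[symmetric])
  have "psi_star \<psi> s \<le> 1 / G"
  proof (rule psi_star_least)
    fix t' :: "real^'n" assume "t' \<in> OmegaN"
    then show "(t' \<bullet> s) / \<psi> t' \<le> 1 / G"
      using g_le[of t'] G Psi_pos[OF psi \<open>t' \<in> OmegaN\<close>]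
      by (simp add: s_def inner_commute divide_le_eq)
  qed
  then have "\<psi> t * psi_star \<psi> s \<le> t \<bullet> s"
    using g_t G Psi_pos[OF psi t] by (simp add: s_def inner_commute mult_left_mono divide_inverse)
  then show ?thesis
    using that[OF s] inner_le_mult_psi_star[OF psi t, of s] by simp
qed

theorem psi_eq_SUP_psi_star:
  fixes \<psi> :: "real^'n \<Rightarrow> real"
  assumes psi: "\<psi> \<in> Psi" and t: "t \<in> OmegaN"
  shows "\<psi> t = (SUP s\<in>OmegaN. (t \<bullet> s) / psi_star \<psi> s)"
proof -
  obtain s where s: "s \<in> OmegaN" "t \<bullet> s = \<psi> t * psi_star \<psi> s"
    by (rule exists_dual_pair[OF psi t])
  have "(t \<bullet> s') / psi_star \<psi> s' \<le> \<psi> t" if "s' \<in> OmegaN" for s'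
    using inner_le_mult_psi_star[OF psi t, of s'] psi_star_pos[OF psi that] by (simp add: divide_le_eq)
  moreover have "(t \<bullet> s) / psi_star \<psi> s = \<psi> t"
    using s psi_star_pos[OF psi s(1)] by simp
  ultimately show ?thesis
    using s(1) by (intro cSup_eq_maximum[symmetric]) (auto intro: rev_image_eqI)
qed

lemma sublinear_convex_combination_lt_1:
  assumes q: "sublinear q" and "q a \<le> 1" "q b \<le> 1" "q ((1/2) *\<^sub>R (a + b)) < 1"
    and "0 < u" "u < 1"
  shows "q (u *\<^sub>R a + (1 - u) *\<^sub>R b) < 1"
proof -
  have *: "q (u *\<^sub>R a + (1 - u) *\<^sub>R b) < 1"
    if "q b \<le> 1" "q m < 1" "m = (1/2) *\<^sub>R (a + b)" "0 < u" "u \<le> 1/2" for a b m u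
  proof -
    have "u *\<^sub>R a + (1 - u) *\<^sub>R b = (2 * u) *\<^sub>R m + (1 - 2 * u) *\<^sub>R b"
      using that(3) by (simp add: algebra_simps flip: scaleR_2)
    then have "q (u *\<^sub>R a + (1 - u) *\<^sub>R b) \<le> q ((2 * u) *\<^sub>R m) + q ((1 - 2 * u) *\<^sub>R b)"
      using sublinear_add_le[OF q] by simp
    also have "\<dots> = (2 * u) * q m + (1 - 2 * u) * q b"
      using sublinear_scaleR[OF q] that by simp
    also have "\<dots> < (2 * u) * 1 + (1 - 2 * u) * 1"
      using that by (intro add_less_le_mono mult_strict_left_mono mult_left_mono) auto
    finally show ?thesis by simp
  qed
  show ?thesis
  proof (cases "u \<le> 1/2")
    case True
    then show ?thesis using *[OF assms(3,4) refl assms(5)] by blast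
  next
    case False
    have "q ((1/2) *\<^sub>R (b + a)) < 1"
      using assms(4) by (simp add: add.commute)
    from *[OF assms(2) this refl, of "1 - u"]
    have "q ((1 - u) *\<^sub>R b + (1 - (1 - u)) *\<^sub>R a) < 1"
      using False assms(6) by simp
    then show ?thesis by (simp add: add.commute)
  qed
qed

definition strictly_convex_norm_nonneg :: "(real^'n \<Rightarrow> real) \<Rightarrow> bool" where
  "strictly_convex_norm_nonneg q \<longleftrightarrow>
     (\<forall>a b. 0 \<le> a \<and> 0 \<le> b \<and> q a = 1 \<and> q b = 1 \<and> a \<noteq> b \<longrightarrow> q ((1/2) *\<^sub>R (a + b)) < 1)"

lemma strictly_convex_norm_nonneg_if_strictly_convex_on:
  fixes q :: "real^'n \<Rightarrow> real"
  assumes q: "sublinear q" and pos: "\<And>t. t \<in> OmegaN \<Longrightarrow> 0 < q t"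
    and strict: "strictly_convex_fun_on OmegaN q"
  shows "strictly_convex_norm_nonneg q"
  unfolding strictly_convex_norm_nonneg_def
proof (intro allI impI, elim conjE)
  fix a b :: "real^'n"
  assume "0 \<le> a" "0 \<le> b" "q a = 1" "q b = 1" "a \<noteq> b"
  moreover have "a \<noteq> 0" "b \<noteq> 0"
    using \<open>q a = 1\<close> \<open>q b = 1\<close> sublinear_0[OF q] by auto
  ultimately obtain \<alpha> x \<beta> y where "0 < \<alpha>" "x \<in> OmegaN" and a: "a = \<alpha> *\<^sub>R x"
    and "0 < \<beta>" "y \<in> OmegaN" and b: "b = \<beta> *\<^sub>R y"
    by (metis nonneg_eq_scaleR_OmegaN)
  have qx: "\<alpha> * q x = 1" and qy: "\<beta> * q y = 1"
    using \<open>q a = 1\<close> \<open>q b = 1\<close> \<open>0 < \<alpha>\<close> \<open>0 < \<beta>\<close> by (simp_all add: a b sublinear_scaleR[OF q])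
  have "x \<noteq> y"
  proof
    assume "x = y"
    then have "(\<alpha> - \<beta>) * q y = 0" using qx qy by (simp add: algebra_simps)
    then show False using pos[OF \<open>y \<in> OmegaN\<close>] \<open>a \<noteq> b\<close> \<open>x = y\<close> by (simp add: a b)
  qed
  define u where "u = \<alpha> / (\<alpha> + \<beta>)"
  have u: "0 < u" "u < 1" and u': "1 - u = \<beta> / (\<alpha> + \<beta>)"
    using \<open>0 < \<alpha>\<close> \<open>0 < \<beta>\<close> by (simp_all add: u_def field_simps)
  have "q (u *\<^sub>R x + (1 - u) *\<^sub>R y) < u * q x + (1 - u) * q y"
    using strict \<open>x \<in> OmegaN\<close> \<open>y \<in> OmegaN\<close> \<open>x \<noteq> y\<close> u
    unfolding strictly_convex_fun_on_def by blast
  also have "\<dots> = 2 / (\<alpha> + \<beta>)"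
    using qx qy \<open>0 < \<alpha>\<close> \<open>0 < \<beta>\<close> unfolding u' by (simp add: u_def field_simps)
  finally have lt: "((\<alpha> + \<beta>) / 2) * q (u *\<^sub>R x + (1 - u) *\<^sub>R y) < 1"
    using \<open>0 < \<alpha>\<close> \<open>0 < \<beta>\<close> by (simp add: field_simps)
  have s1: "((\<alpha> + \<beta>) / 2) * u = \<alpha> / 2" and s2: "((\<alpha> + \<beta>) / 2) * (1 - u) = \<beta> / 2"
    using \<open>0 < \<alpha>\<close> \<open>0 < \<beta>\<close> unfolding u' by (simp_all add: u_def field_simps)
  have "((\<alpha> + \<beta>) / 2) *\<^sub>R (u *\<^sub>R x + (1 - u) *\<^sub>R y)
      = (((\<alpha> + \<beta>) / 2) * u) *\<^sub>R x + (((\<alpha> + \<beta>) / 2) * (1 - u)) *\<^sub>R y"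
    by (simp only: scaleR_add_right scaleR_scaleR)
  also have "\<dots> = (1/2) *\<^sub>R (a + b)"
    unfolding s1 s2 by (simp add: a b scaleR_add_right)
  finally have "(1/2) *\<^sub>R (a + b) = ((\<alpha> + \<beta>) / 2) *\<^sub>R (u *\<^sub>R x + (1 - u) *\<^sub>R y)" ..
  then show "q ((1/2) *\<^sub>R (a + b)) < 1"
    using lt \<open>0 < \<alpha>\<close> \<open>0 < \<beta>\<close> by (simp add: sublinear_scaleR[OF q])
qed

lemma rescale_convex_combination:
  fixes x y :: "'a::real_vector"
  assumes "0 < \<alpha>" "0 < \<beta>" "0 < u" "u < 1"
  obtains \<mu> K where "0 < \<mu>" "\<mu> < 1" "0 < K" "K = u * \<alpha> + (1 - u) * \<beta>"
    "\<mu> *\<^sub>R ((1 / \<alpha>) *\<^sub>R x) + (1 - \<mu>) *\<^sub>R ((1 / \<beta>) *\<^sub>R y) = (1 / K) *\<^sub>R (u *\<^sub>R x + (1 - u) *\<^sub>R y)"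
proof -
  define K where "K = u * \<alpha> + (1 - u) * \<beta>"
  define \<mu> where "\<mu> = u * \<alpha> / K"
  have K: "0 < K"
    using assms by (simp add: K_def add_pos_pos)
  have "0 < \<mu>" "\<mu> < 1"
    using assms K by (simp_all add: \<mu>_def K_def field_simps)
  moreover have "1 - \<mu> = (1 - u) * \<beta> / K"
    using K by (simp add: \<mu>_def K_def field_simps)
  then have "\<mu> / \<alpha> = u / K" "(1 - \<mu>) / \<beta> = (1 - u) / K"
    using assms by (simp_all add: \<mu>_def)
  then have "\<mu> *\<^sub>R ((1 / \<alpha>) *\<^sub>R x) + (1 - \<mu>) *\<^sub>R ((1 / \<beta>) *\<^sub>R y) = (1 / K) *\<^sub>R (u *\<^sub>R x + (1 - u) *\<^sub>R y)"
    by (simp add: scaleR_add_right)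
  ultimately show ?thesis
    using that K K_def by blast
qed

lemma strictly_convex_on_if_strictly_convex_norm_nonneg:
  fixes q :: "real^'n \<Rightarrow> real"
  assumes q: "sublinear q" and pos: "\<And>t. t \<in> OmegaN \<Longrightarrow> 0 < q t"
    and strict: "strictly_convex_norm_nonneg q"
  shows "strictly_convex_fun_on OmegaN q"
  unfolding strictly_convex_fun_on_def
proof (intro conjI ballI allI impI)
  show "convex_on OmegaN q" by (rule sublinear_convex_on[OF q convex_OmegaN])
  fix x y :: "real^'n" and u :: real
  assume x: "x \<in> OmegaN" and y: "y \<in> OmegaN" and "x \<noteq> y \<and> 0 < u \<and> u < 1"
  then have "x \<noteq> y" "0 < u" "u < 1" by auto
  define \<alpha> \<beta> where "\<alpha> = q x" and "\<beta> = q y"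
  have "0 < \<alpha>" "0 < \<beta>" using pos x y by (simp_all add: \<alpha>_def \<beta>_def)
  define a b where "a = (1 / \<alpha>) *\<^sub>R x" and "b = (1 / \<beta>) *\<^sub>R y"
  have "q a = 1" "q b = 1"
    using \<open>0 < \<alpha>\<close> \<open>0 < \<beta>\<close> by (simp_all add: a_def b_def \<alpha>_def \<beta>_def sublinear_scaleR[OF q])
  moreover have "0 \<le> a" "0 \<le> b"
    using \<open>0 < \<alpha>\<close> \<open>0 < \<beta>\<close> OmegaN_nonneg_vec[OF x] OmegaN_nonneg_vec[OF y]
    by (simp_all add: a_def b_def scaleR_nonneg_nonneg)
  moreover have "a \<noteq> b"
  proof
    assume "a = b"
    then have "(\<Sum>i\<in>UNIV. a$i) = (\<Sum>i\<in>UNIV. b$i)" by simp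
    then have "\<alpha> = \<beta>"
      using OmegaN_sum[OF x] OmegaN_sum[OF y] \<open>0 < \<alpha>\<close> \<open>0 < \<beta>\<close>
      by (simp add: a_def b_def sum_divide_distrib[symmetric])
    then show False using \<open>a = b\<close> \<open>x \<noteq> y\<close> \<open>0 < \<alpha>\<close> by (simp add: a_def b_def)
  qed
  ultimately have mid: "q ((1/2) *\<^sub>R (a + b)) < 1"
    using strict by (simp add: strictly_convex_norm_nonneg_def)
  obtain \<mu> K where \<mu>: "0 < \<mu>" "\<mu> < 1" and K: "0 < K" "K = u * \<alpha> + (1 - u) * \<beta>"
    and "\<mu> *\<^sub>R a + (1 - \<mu>) *\<^sub>R b = (1 / K) *\<^sub>R (u *\<^sub>R x + (1 - u) *\<^sub>R y)"
    unfolding a_def b_def using \<open>0 < \<alpha>\<close> \<open>0 < \<beta>\<close> \<open>0 < u\<close> \<open>u < 1\<close> by (rule rescale_convex_combination)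
  then have "q (\<mu> *\<^sub>R a + (1 - \<mu>) *\<^sub>R b) = (1 / K) * q (u *\<^sub>R x + (1 - u) *\<^sub>R y)"
    using K(1) by (simp add: sublinear_scaleR[OF q])
  moreover have "q (\<mu> *\<^sub>R a + (1 - \<mu>) *\<^sub>R b) < 1"
    using sublinear_convex_combination_lt_1[OF q _ _ mid \<mu>] \<open>q a = 1\<close> \<open>q b = 1\<close> by simp
  ultimately have "(1 / K) * q (u *\<^sub>R x + (1 - u) *\<^sub>R y) < 1"
    by linarith
  then have "q (u *\<^sub>R x + (1 - u) *\<^sub>R y) < K"
    using K(1) by (simp add: field_simps)
  then show "q (u *\<^sub>R x + (1 - u) *\<^sub>R y) < u * q x + (1 - u) * q y"
    by (simp add: K(2) \<alpha>_def \<beta>_def)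
qed

lemma psi_dual_norm_eq_psi_star: "psi_dual_norm \<psi> f = psi_star \<psi> (\<chi> i. norm (f$i))"
  unfolding psi_dual_norm_def psi_star_def by (simp add: inner_vec_def)

theorem psi_star_eq_psi_dual_norm:
  fixes u :: "'n::finite \<Rightarrow> ('a::real_normed_vector \<Rightarrow>\<^sub>L real)"
  assumes "\<And>i. norm (u i) = 1" and "0 \<le> s"
  shows "psi_star \<psi> s = psi_dual_norm \<psi> (\<chi> i. s$i *\<^sub>R u i)"
  using assms by (simp add: psi_dual_norm_eq_psi_star less_eq_vec_def vec_eq_iff[symmetric])

lemma is_norm_psi_dual_norm:
  fixes \<psi> :: "real^'n \<Rightarrow> real"
  assumes psi: "\<psi> \<in> Psi"
  shows "is_norm (psi_dual_norm \<psi> :: ('a::real_normed_vector \<Rightarrow>\<^sub>L real)^'n \<Rightarrow> real)"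
  unfolding is_norm_def
proof (intro conjI allI)
  fix f :: "('a \<Rightarrow>\<^sub>L real)^'n"
  show "psi_dual_norm \<psi> f = 0 \<longleftrightarrow> f = 0"
  proof
    assume "psi_dual_norm \<psi> f = 0"
    then have "norm (f$i) \<le> 0" for i
      using psi_star_component_le[OF psi, of "\<chi> i. norm (f$i)" i] by (simp add: psi_dual_norm_eq_psi_star)
    then show "f = 0" by (simp add: vec_eq_iff)
  next
    assume "f = 0"
    then have "(\<chi> i. norm (f$i)) = 0" by (simp add: vec_eq_iff)
    then show "psi_dual_norm \<psi> f = 0"
      by (simp add: psi_dual_norm_eq_psi_star sublinear_0[OF sublinear_psi_star[OF psi]])
  qed
next
  fix f g :: "('a \<Rightarrow>\<^sub>L real)^'n"
  have "psi_star \<psi> (\<chi> i. norm ((f + g)$i)) \<le> psi_star \<psi> ((\<chi> i. norm (f$i)) + (\<chi> i. norm (g$i)))"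
    by (rule monoD[OF mono_psi_star[OF psi]]) (simp add: less_eq_vec_def norm_triangle_ineq)
  also have "\<dots> \<le> psi_star \<psi> (\<chi> i. norm (f$i)) + psi_star \<psi> (\<chi> i. norm (g$i))"
    by (rule sublinear_add_le[OF sublinear_psi_star[OF psi]])
  finally show "psi_dual_norm \<psi> (f + g) \<le> psi_dual_norm \<psi> f + psi_dual_norm \<psi> g"
    by (simp add: psi_dual_norm_eq_psi_star)
next
  fix c :: real and f :: "('a \<Rightarrow>\<^sub>L real)^'n"
  have "(\<chi> i. norm ((c *\<^sub>R f)$i)) = \<bar>c\<bar> *\<^sub>R (\<chi> i. norm (f$i))"
    by (simp add: vec_eq_iff)
  then show "psi_dual_norm \<psi> (c *\<^sub>R f) = \<bar>c\<bar> * psi_dual_norm \<psi> f"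
    by (simp add: psi_dual_norm_eq_psi_star sublinear_scaleR[OF sublinear_psi_star[OF psi]])
qed

lemma psi_dual_norm_sign_invariant:
  assumes "\<And>i. \<epsilon> i = 1 \<or> \<epsilon> i = -1"
  shows "psi_dual_norm \<psi> (\<chi> i. \<epsilon> i *\<^sub>R f$i) = psi_dual_norm \<psi> f"
proof -
  have "\<bar>\<epsilon> i\<bar> = 1" for i using assms[of i] by auto
  then show ?thesis by (simp add: psi_dual_norm_eq_psi_star)
qed

lemma psi_dual_norm_coordinate:
  fixes \<psi> :: "real^'n \<Rightarrow> real" and v :: "'a::real_normed_vector \<Rightarrow>\<^sub>L real"
  assumes psi: "\<psi> \<in> Psi"
  shows "psi_dual_norm \<psi> (\<chi> j. if j = i then v else 0) = norm v"
proof -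
  have "(\<chi> j. norm ((\<chi> j. if j = i then v else 0)$j)) = norm v *\<^sub>R (axis i 1 :: real^'n)"
    by (simp add: vec_eq_iff axis_def)
  then show ?thesis
    by (simp add: psi_dual_norm_eq_psi_star sublinear_scaleR[OF sublinear_psi_star[OF psi]] psi_star_axis[OF psi])
qed

lemma psi_dual_norm_in_Nsc_iff_strictly_convex:
  fixes \<psi> :: "real^'n \<Rightarrow> real"
  assumes "\<psi> \<in> Psi"
  shows "(psi_dual_norm \<psi> :: ('a::real_normed_vector \<Rightarrow>\<^sub>L real)^'n \<Rightarrow> real) \<in> Nsc
    \<longleftrightarrow> strictly_convex_norm (psi_dual_norm \<psi> :: ('a \<Rightarrow>\<^sub>L real)^'n \<Rightarrow> real)"
  using is_norm_psi_dual_norm[OF assms] psi_dual_norm_sign_invariant psi_dual_norm_coordinate[OF assms]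
  by (auto simp: Nsc_def)

lemma exists_norm_1_blinfun:
  fixes x0 :: "'a::real_normed_vector"
  assumes "x0 \<noteq> 0"
  obtains e :: "'a \<Rightarrow>\<^sub>L real" where "norm e = 1"
proof -
  have "sublinear (norm :: 'a \<Rightarrow> real)"
    by (simp add: sublinear_def norm_triangle_ineq)
  then obtain f where "linear f" and f_le: "\<And>x. f x \<le> norm x" and "f x0 = norm x0"
    using hahn_banach_sublinear by blast
  have "bounded_linear f"
  proof (rule bounded_linear_intro[where K = 1])
    show "norm (f x) \<le> norm x * 1" for x
      using f_le[of x] f_le[of "- x"] linear_neg[OF \<open>linear f\<close>, of x] by simp
  qed (simp_all add: linear_add[OF \<open>linear f\<close>] linear_scale[OF \<open>linear f\<close>])
  then have "blinfun_apply (Blinfun f) x0 \<noteq> 0"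
    using \<open>f x0 = norm x0\<close> assms by (simp add: bounded_linear_Blinfun_apply)
  then have "0 < norm (Blinfun f)"
    by (metis zero_less_norm_iff zero_blinfun.rep_eq)
  then have "norm ((1 / norm (Blinfun f)) *\<^sub>R Blinfun f) = 1" by simp
  then show ?thesis by (rule that)
qed

lemma strictly_convex_norm_if_coordinate_embedding:
  fixes N :: "'b::real_normed_vector^'n \<Rightarrow> real"
  assumes embed: "\<And>v. N (\<chi> j. if j = i then v else 0) = norm v" and "strictly_convex_norm N"
  shows "strictly_convex_norm (norm :: 'b \<Rightarrow> real)"
  unfolding strictly_convex_norm_def
proof (intro allI impI, elim conjE)
  fix x y :: 'b assume "norm x = 1" "norm y = 1" "x \<noteq> y"
  let ?E = "\<lambda>v. \<chi> j. if j = i then v else 0"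
  have "?E x \<noteq> ?E y" using \<open>x \<noteq> y\<close> by (auto simp: vec_eq_iff)
  then have "N ((1/2) *\<^sub>R (?E x + ?E y)) < 1"
    using assms(2) \<open>norm x = 1\<close> \<open>norm y = 1\<close> embed by (simp add: strictly_convex_norm_def)
  moreover have "(1/2) *\<^sub>R (?E x + ?E y) = ?E ((1/2) *\<^sub>R (x + y))"
    by (simp add: vec_eq_iff)
  ultimately show "norm ((1/2) *\<^sub>R (x + y)) < 1" by (simp add: embed)
qed

lemma strictly_convex_norm_eq_if_midpoint:
  fixes x y :: "'b::real_normed_vector"
  assumes sc: "strictly_convex_norm (norm :: 'b \<Rightarrow> real)"
    and "norm x = norm y" "norm ((1/2) *\<^sub>R (x + y)) = norm x"
  shows "x = y"
proof (rule ccontr)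
  assume "x \<noteq> y"
  let ?r = "norm x"
  have "0 < ?r" using \<open>x \<noteq> y\<close> assms(2) by auto
  then have "norm ((1/2) *\<^sub>R ((1 / ?r) *\<^sub>R x + (1 / ?r) *\<^sub>R y)) < 1"
    using sc \<open>x \<noteq> y\<close> assms(2) by (simp add: strictly_convex_norm_def)
  moreover have "(1/2) *\<^sub>R ((1 / ?r) *\<^sub>R x + (1 / ?r) *\<^sub>R y) = (1 / ?r) *\<^sub>R ((1/2) *\<^sub>R (x + y))"
    by (simp add: scaleR_add_right mult.commute)
  ultimately show False using assms(3) \<open>0 < ?r\<close> by simp
qed

lemma strictly_convex_norm_nonneg_equality_case:
  fixes a b c :: "real^'n"
  assumes q: "sublinear q" "mono q" "strictly_convex_norm_nonneg q"
    and "0 \<le> a" "0 \<le> b" "0 \<le> c" "q a = 1" "q b = 1"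
    and c_le: "c \<le> (1/2) *\<^sub>R (a + b)" and "1 \<le> q c"
  shows "a = b" "c = a"
proof -
  have mid_le: "q ((1/2) *\<^sub>R (a + b)) \<le> 1"
    using sublinear_add_le[OF q(1), of a b] sublinear_scaleR[OF q(1), of "1/2" "a + b"] assms by simp
  moreover have "q c \<le> q ((1/2) *\<^sub>R (a + b))"
    by (rule monoD[OF q(2) c_le])
  ultimately have "q ((1/2) *\<^sub>R (a + b)) = 1" "q c = 1"
    using \<open>1 \<le> q c\<close> by linarith+
  then show "a = b"
    using q(3) assms unfolding strictly_convex_norm_nonneg_def by force
  then have "c \<le> a"
    using c_le by (simp flip: scaleR_2)
  show "c = a"
  proof (rule ccontr)
    assume "c \<noteq> a"
    then have "q ((1/2) *\<^sub>R (c + a)) < 1"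
      using q(3) assms \<open>q c = 1\<close> \<open>c \<le> a\<close> by (simp add: strictly_convex_norm_nonneg_def)
    moreover have "c \<le> (1/2) *\<^sub>R (c + a)"
      using \<open>c \<le> a\<close> by (simp add: less_eq_vec_def)
    ultimately show False using monoD[OF q(2)] \<open>q c = 1\<close> by fastforce
  qed
qed

lemma strictly_convex_psi_star_if_psi_dual_norm:
  fixes \<psi> :: "real^'n \<Rightarrow> real" and x0 :: "'a::real_normed_vector"
  assumes psi: "\<psi> \<in> Psi" and "x0 \<noteq> 0"
    and sc: "strictly_convex_norm (psi_dual_norm \<psi> :: ('a \<Rightarrow>\<^sub>L real)^'n \<Rightarrow> real)"
  shows "strictly_convex_fun_on OmegaN (psi_star \<psi>)"
proof (rule strictly_convex_on_if_strictly_convex_norm_nonneg[OF sublinear_psi_star[OF psi]])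
  show "0 < psi_star \<psi> t" if "t \<in> OmegaN" for t
    by (rule psi_star_pos[OF psi that])
  obtain e :: "'a \<Rightarrow>\<^sub>L real" where e: "norm e = 1"
    using exists_norm_1_blinfun[OF \<open>x0 \<noteq> 0\<close>] by blast
  let ?V = "\<lambda>c :: real^'n. \<chi> i. c$i *\<^sub>R e"
  have V: "psi_star \<psi> c = psi_dual_norm \<psi> (?V c)" if "0 \<le> c" for c
    using psi_star_eq_psi_dual_norm[of "\<lambda>_. e" c \<psi>] e that by simp
  show "strictly_convex_norm_nonneg (psi_star \<psi>)"
    unfolding strictly_convex_norm_nonneg_def
  proof (intro allI impI, elim conjE)
    fix a b :: "real^'n"
    assume "0 \<le> a" "0 \<le> b" "psi_star \<psi> a = 1" "psi_star \<psi> b = 1" "a \<noteq> b"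
    have "?V a \<noteq> ?V b"
      using \<open>a \<noteq> b\<close> e by (auto simp: vec_eq_iff)
    then have "psi_dual_norm \<psi> ((1/2) *\<^sub>R (?V a + ?V b)) < 1"
      using sc V \<open>0 \<le> a\<close> \<open>0 \<le> b\<close> \<open>psi_star \<psi> a = 1\<close> \<open>psi_star \<psi> b = 1\<close>
      by (simp add: strictly_convex_norm_def)
    moreover have "(1/2) *\<^sub>R (?V a + ?V b) = ?V ((1/2) *\<^sub>R (a + b))"
      by (simp add: vec_eq_iff scaleR_add_right scaleR_add_left add_divide_distrib)
    moreover have "0 \<le> (1/2) *\<^sub>R (a + b)"
      using \<open>0 \<le> a\<close> \<open>0 \<le> b\<close> by (simp add: less_eq_vec_def)
    ultimately show "psi_star \<psi> ((1/2) *\<^sub>R (a + b)) < 1"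
      using V by simp
  qed
qed

lemma strictly_convex_psi_dual_norm_if:
  fixes \<psi> :: "real^'n \<Rightarrow> real"
  assumes psi: "\<psi> \<in> Psi" and strict: "strictly_convex_fun_on OmegaN (psi_star \<psi>)"
    and sc: "strictly_convex_norm (norm :: ('a::real_normed_vector \<Rightarrow>\<^sub>L real) \<Rightarrow> real)"
  shows "strictly_convex_norm (psi_dual_norm \<psi> :: ('a \<Rightarrow>\<^sub>L real)^'n \<Rightarrow> real)"
  unfolding strictly_convex_norm_def
proof (intro allI impI, elim conjE)
  let ?q = "psi_star \<psi>" and ?abs = "\<lambda>f :: ('a \<Rightarrow>\<^sub>L real)^'n. \<chi> i. norm (f$i)"
  have q: "sublinear ?q" "mono ?q" "strictly_convex_norm_nonneg ?q"
    using strictly_convex_norm_nonneg_if_strictly_convex_on[OF sublinear_psi_star[OF psi] psi_star_pos[OF psi] strict]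
    by (simp_all add: sublinear_psi_star[OF psi] mono_psi_star[OF psi])
  fix f g :: "('a \<Rightarrow>\<^sub>L real)^'n"
  assume "psi_dual_norm \<psi> f = 1" "psi_dual_norm \<psi> g = 1" "f \<noteq> g"
  then have qa: "?q (?abs f) = 1" and qb: "?q (?abs g) = 1"
    by (simp_all add: psi_dual_norm_eq_psi_star)
  show "psi_dual_norm \<psi> ((1/2) *\<^sub>R (f + g)) < 1"
  proof (rule ccontr)
    assume "\<not> ?thesis"
    then have "1 \<le> ?q (?abs ((1/2) *\<^sub>R (f + g)))"
      by (simp add: psi_dual_norm_eq_psi_star)
    moreover have "?abs ((1/2) *\<^sub>R (f + g)) \<le> (1/2) *\<^sub>R (?abs f + ?abs g)"
      by (simp add: less_eq_vec_def norm_triangle_ineq flip: distrib_left)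
    moreover have nonneg: "0 \<le> ?abs h" for h
      by (simp add: less_eq_vec_def)
    ultimately have eq: "?abs f = ?abs g" "?abs ((1/2) *\<^sub>R (f + g)) = ?abs f"
      using strictly_convex_norm_nonneg_equality_case[OF q nonneg nonneg nonneg qa qb] by blast+
    have "norm (f$i) = norm (g$i)" "norm ((1/2) *\<^sub>R (f$i + g$i)) = norm (f$i)" for i
      using arg_cong[OF eq(1), of "\<lambda>v. v$i"] arg_cong[OF eq(2), of "\<lambda>v. v$i"] by simp_all
    then have "f$i = g$i" for i
      by (rule strictly_convex_norm_eq_if_midpoint[OF sc])
    then show False using \<open>f \<noteq> g\<close> by (simp add: vec_eq_iff)
  qed
qed

theorem psi_dual_norm_in_Nsc_iff:
  fixes \<psi> :: "real^'n \<Rightarrow> real" and x0 :: "'a::real_normed_vector"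
  assumes psi: "\<psi> \<in> Psi" and "x0 \<noteq> 0"
  shows "(psi_dual_norm \<psi> :: ('a \<Rightarrow>\<^sub>L real)^'n \<Rightarrow> real) \<in> Nsc \<longleftrightarrow>
    psi_star \<psi> \<in> Psi_sc \<and> strictly_convex_norm (norm :: ('a \<Rightarrow>\<^sub>L real) \<Rightarrow> real)"
  using psi_dual_norm_in_Nsc_iff_strictly_convex[OF psi]
    strictly_convex_psi_star_if_psi_dual_norm[OF psi \<open>x0 \<noteq> 0\<close>]
    strictly_convex_norm_if_coordinate_embedding[OF psi_dual_norm_coordinate[OF psi]]
    strictly_convex_psi_dual_norm_if[OF psi] psi_star_in_Psi[OF psi]
  by (auto simp: Psi_sc_def)

theorem proposition3p3:
  fixes \<psi> :: "(real^'n) \<Rightarrow> real"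
  assumes n2: "CARD('n) \<ge> 2"
    and X_nontriv: "\<exists>x::'a::real_normed_vector. x \<noteq> 0"
    and psi: "\<psi> \<in> Psi"
  shows "psi_star \<psi> \<in> Psi
    \<and> ((psi_dual_norm \<psi> :: ('a \<Rightarrow>\<^sub>L real)^'n \<Rightarrow> real) \<in> Nsc \<longleftrightarrow>
           psi_star \<psi> \<in> Psi_sc \<and> strictly_convex_norm (norm :: ('a \<Rightarrow>\<^sub>L real) \<Rightarrow> real))
    \<and> (\<forall>(u :: 'n \<Rightarrow> ('a \<Rightarrow>\<^sub>L real)) s. (\<forall>i. norm (u i) = 1) \<and> s \<in> OmegaN \<longrightarrow>
           psi_star \<psi> s = psi_dual_norm \<psi> (\<chi> i. s$i *\<^sub>R u i))
    \<and> (\<forall>t\<in>OmegaN. \<forall>s\<in>OmegaN.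
           (t \<bullet> s = \<psi> t * psi_star \<psi> s \<longleftrightarrow>
            (1 / psi_norm (psi_star \<psi>) s) *\<^sub>R s \<in> subdiff (psi_norm \<psi> :: real^'n \<Rightarrow> real) t))
    \<and> (\<forall>t\<in>OmegaN. \<psi> t = (SUP s\<in>OmegaN. (t \<bullet> s) / psi_star \<psi> s))"
proof -
  obtain x0 :: 'a where "x0 \<noteq> 0" using X_nontriv by blast
  show ?thesis
    using psi_star_in_Psi[OF psi] psi_dual_norm_in_Nsc_iff[OF psi \<open>x0 \<noteq> 0\<close>]
      psi_star_eq_psi_dual_norm[OF _ OmegaN_nonneg_vec, of _ _ \<psi>]
      dual_pair_iff_subgradient[OF psi] psi_eq_SUP_psi_star[OF psi]
    by blast
qed

end
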